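(* Let $Q$ be a Foulis quantale. For $u\in Q$ let $\sigma_u\colon[Q]\to[Q]$ be the Sasaki action $\sigma_u(k)=(u\cdot k)^{\perp\perp}$. Then $\sigma_u\in\mathrm{Lin}([Q])$ for every $u$, and the map $h\colon Q\to\mathrm{Lin}([Q])$, $h(u)=\sigma_u$, is a homomorphism of Foulis quantales, where $\mathrm{Lin}([Q])$ carries the Foulis quantale structure given by composition, pointwise joins, identity unit, involution $f\mapsto f^\star$, and $[f]=\pi_{f^\star(1)^\perp}$. In particular $h(u^* )=h(u)^\star$ and $h(u^\perp)=h(u)^\perp$ for all $u\in Q$.
   Context: A quantale is a complete lattice $Q$ (join $\bigsqcup$) with associative multiplication distributing over arbitrary joins on both sides; unital if it has a two-sided unit $e$; involutive if it has a join-preserving semigroup involution $*$. A Foulis quantale is a unital involutive quantale $Q$ with an endomap $[-]\colon Q\to Q$ such that: (a) $[s]\cdot[s]=[s]=[s]^*$; (b) $[e]=0$; (c) $s\cdot x=0$ iff $x=[s]\cdot y$ for some $y\in Q$. For $t\in Q$ put $t^\perp=[t^*]$. The set $[Q]=\{[t]\mid t\in Q\}$ is a complete orthomodular lattice with order $k_1\le k_2$ iff $k_1=k_2\cdot k_1$, top $[0]$, orthocomplement $k^\perp=[k]$, joins $\bigvee S=[[\bigsqcup S]]$. For a complete orthomodular lattice $X$, write $x\perp y$ iff $x\le y^\perp$; a map $f\colon X\to X$ is linear if there is $g$ with $f(x)\perp y\iff x\perp g(y)$ for all $x,y$ (such $g$ is unique, denoted $f^\star$); $\mathrm{Lin}(X)$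 is the set of linear maps; for $a\in X$ the Sasaki projection is $\pi_a(y)=a\wedge(a^\perp\vee y)$. A homomorphism of Foulis quantales is a map preserving arbitrary joins, binary multiplication, unit, involution, and $(-)^\perp$. *)

theory Defs
  imports Main
begin

text \<open>A Foulis quantale on a complete lattice type 'q (order and Sup are the
lattice ones), given by multiplication m, unit e, involution invo and the
Foulis map brk (written [-] in the paper).\<close>

definition quantale :: "('q::complete_lattice \<Rightarrow> 'q \<Rightarrow> 'q) \<Rightarrow> bool" where
  "quantale m \<longleftrightarrow>
     (\<forall>a b c. m (m a b) c = m a (m b c)) \<and>
     (\<forall>a A. m a (Sup A) = Sup ((\<lambda>x. m a x) ` A)) \<and>
     (\<forall>a A. m (Sup A) a = Sup ((\<lambda>x. m x a) ` A))"

definition unital_involutive_quantale ::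
  "('q::complete_lattice \<Rightarrow> 'q \<Rightarrow> 'q) \<Rightarrow> 'q \<Rightarrow> ('q \<Rightarrow> 'q) \<Rightarrow> bool" where
  "unital_involutive_quantale m e invo \<longleftrightarrow>
     quantale m \<and>
     (\<forall>a. m e a = a \<and> m a e = a) \<and>
     (\<forall>a. invo (invo a) = a) \<and>
     (\<forall>a b. invo (m a b) = m (invo b) (invo a)) \<and>
     (\<forall>A. invo (Sup A) = Sup (invo ` A))"

definition foulis_quantale ::
  "('q::complete_lattice \<Rightarrow> 'q \<Rightarrow> 'q) \<Rightarrow> 'q \<Rightarrow> ('q \<Rightarrow> 'q) \<Rightarrow> ('q \<Rightarrow> 'q) \<Rightarrow> bool" where
  "foulis_quantale m e invo brk \<longleftrightarrow>
     unital_involutive_quantale m e invo \<and>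
     (\<forall>s. m (brk s) (brk s) = brk s \<and> brk s = invo (brk s)) \<and>
     brk e = bot \<and>
     (\<forall>s x. m s x = bot \<longleftrightarrow> (\<exists>y. x = m (brk s) y))"

definition fperp :: "('q \<Rightarrow> 'q) \<Rightarrow> ('q \<Rightarrow> 'q) \<Rightarrow> 'q \<Rightarrow> 'q" where
  "fperp invo brk t = brk (invo t)"

definition projs :: "('q \<Rightarrow> 'q) \<Rightarrow> 'q set" where
  "projs brk = range brk"

definition ple :: "('q \<Rightarrow> 'q \<Rightarrow> 'q) \<Rightarrow> 'q \<Rightarrow> 'q \<Rightarrow> bool" where
  "ple m k1 k2 \<longleftrightarrow> k1 = m k2 k1"

definition ptop :: "('q::complete_lattice \<Rightarrow> 'q) \<Rightarrow> 'q" where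
  "ptop brk = brk bot"

definition poc :: "('q \<Rightarrow> 'q) \<Rightarrow> 'q \<Rightarrow> 'q" where
  "poc brk k = brk k"

definition pJoin :: "('q::complete_lattice \<Rightarrow> 'q) \<Rightarrow> 'q set \<Rightarrow> 'q" where
  "pJoin brk S = brk (brk (Sup S))"

definition pmeet :: "('q::complete_lattice \<Rightarrow> 'q) \<Rightarrow> 'q \<Rightarrow> 'q \<Rightarrow> 'q" where
  "pmeet brk a b = poc brk (pJoin brk {poc brk a, poc brk b})"

definition porth :: "('q \<Rightarrow> 'q \<Rightarrow> 'q) \<Rightarrow> ('q \<Rightarrow> 'q) \<Rightarrow> 'q \<Rightarrow> 'q \<Rightarrow> bool" where
  "porth m brk x y \<longleftrightarrow> ple m x (poc brk y)"

definition sasaki :: "('q::complete_lattice \<Rightarrow> 'q) \<Rightarrow> 'q \<Rightarrow> 'q \<Rightarrow> 'q" where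
  "sasaki brk a y = pmeet brk a (pJoin brk {poc brk a, y})"

text \<open>Maps [Q] -> [Q] are represented by functions 'q => 'q; only their values on
[Q] matter. f is linear (f \<in> Lin([Q])) iff it maps [Q] into [Q] and has an adjoint.\<close>
definition is_adjoint :: "('q \<Rightarrow> 'q \<Rightarrow> 'q) \<Rightarrow> ('q \<Rightarrow> 'q) \<Rightarrow> ('q \<Rightarrow> 'q) \<Rightarrow> ('q \<Rightarrow> 'q) \<Rightarrow> bool" where
  "is_adjoint m brk f g \<longleftrightarrow>
     (\<forall>y\<in>projs brk. g y \<in> projs brk) \<and>
     (\<forall>x\<in>projs brk. \<forall>y\<in>projs brk. porth m brk (f x) y \<longleftrightarrow> porth m brk x (g y))"

definition linear_map :: "('q \<Rightarrow> 'q \<Rightarrow> 'q) \<Rightarrow> ('q \<Rightarrow> 'q) \<Rightarrow> ('q \<Rightarrow> 'q) \<Rightarrow> bool" where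
  "linear_map m brk f \<longleftrightarrow>
     (\<forall>x\<in>projs brk. f x \<in> projs brk) \<and> (\<exists>g. is_adjoint m brk f g)"

text \<open>The (unique on [Q]) adjoint f^star.\<close>
definition lin_star :: "('q \<Rightarrow> 'q \<Rightarrow> 'q) \<Rightarrow> ('q \<Rightarrow> 'q) \<Rightarrow> ('q \<Rightarrow> 'q) \<Rightarrow> 'q \<Rightarrow> 'q" where
  "lin_star m brk f = (SOME g. is_adjoint m brk f g)"

definition lin_Join :: "('q::complete_lattice \<Rightarrow> 'q) \<Rightarrow> ('q \<Rightarrow> 'q) set \<Rightarrow> 'q \<Rightarrow> 'q" where
  "lin_Join brk F = (\<lambda>k. pJoin brk ((\<lambda>f. f k) ` F))"

definition lin_brk :: "('q::complete_lattice \<Rightarrow> 'q \<Rightarrow> 'q) \<Rightarrow> ('q \<Rightarrow> 'q) \<Rightarrow> ('q \<Rightarrow> 'q) \<Rightarrow> 'q \<Rightarrow> 'q" where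
  "lin_brk m brk f = sasaki brk (poc brk (lin_star m brk f (ptop brk)))"

definition lin_perp :: "('q::complete_lattice \<Rightarrow> 'q \<Rightarrow> 'q) \<Rightarrow> ('q \<Rightarrow> 'q) \<Rightarrow> ('q \<Rightarrow> 'q) \<Rightarrow> 'q \<Rightarrow> 'q" where
  "lin_perp m brk f = lin_brk m brk (lin_star m brk f)"

definition sasaki_action :: "('q \<Rightarrow> 'q \<Rightarrow> 'q) \<Rightarrow> ('q \<Rightarrow> 'q) \<Rightarrow> ('q \<Rightarrow> 'q) \<Rightarrow> 'q \<Rightarrow> 'q \<Rightarrow> 'q" where
  "sasaki_action m invo brk u k = fperp invo brk (fperp invo brk (m u k))"

end

theory Submission
  imports Defs
begin

text \<open>Everything is governed by annihilators: \<open>s \<cdot> x = 0\<close> iff \<open>[s] \<cdot> x = x\<close>, and a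
projection \<open>p \<in> [Q]\<close> is determined by its left annihilators \<open>{a. a \<cdot> p = 0}\<close>.
The element \<open>\<sigma>\<^sub>u(k) = (u k)\<^sup>\<perp>\<^sup>\<perp>\<close> has the same left annihilators as \<open>u \<cdot> k\<close>; this
immediately gives multiplicativity, preservation of joins and of the unit, and,
since the involution exchanges left and right annihilators, the adjunction
\<open>\<sigma>\<^sub>u \<stileturn> \<sigma>\<^sub>u\<^sub>*\<close>. For the perp clause one shows that \<open>\<sigma>\<^sub>p\<close> is the Sasaki projection
\<open>\<pi>\<^sub>p\<close> whenever \<open>p\<close> is a projection, comparing both sides through the elements
they fix on the left.\<close>

locale foulis =
  fixes m :: "'q::complete_lattice \<Rightarrow> 'q \<Rightarrow> 'q" (infixl "\<odot>" 70)
    and e :: 'q and invo :: "'q \<Rightarrow> 'q" and brk :: "'q \<Rightarrow> 'q"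
  assumes foulis: "foulis_quantale m e invo brk"
begin

lemma mult_assoc: "a \<odot> b \<odot> c = a \<odot> (b \<odot> c)"
  and mult_Sup_left: "a \<odot> Sup A = (SUP x\<in>A. a \<odot> x)"
  and mult_Sup_right: "Sup A \<odot> a = (SUP x\<in>A. x \<odot> a)"
  using foulis unfolding foulis_quantale_def unital_involutive_quantale_def quantale_def
  by blast+

lemma unit_right: "a \<odot> e = a"
  and invo_invo [simp]: "invo (invo a) = a"
  and invo_mult: "invo (a \<odot> b) = invo b \<odot> invo a"
  and invo_Sup: "invo (Sup A) = Sup (invo ` A)"
  using foulis unfolding foulis_quantale_def unital_involutive_quantale_def by blast+

lemma brk_idem: "brk s \<odot> brk s = brk s"
  and invo_brk [simp]: "invo (brk s) = brk s"
  and mult_eq_bot_iff_ex: "s \<odot> x = bot \<longleftrightarrow> (\<exists>y. x = brk s \<odot> y)"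
  using foulis unfolding foulis_quantale_def by metis+

lemma bot_mult [simp]: "bot \<odot> x = bot"
  using mult_Sup_right[of "{}"] by simp

lemma mult_bot [simp]: "x \<odot> bot = bot"
  using mult_Sup_left[of x "{}"] by simp

lemma invo_eq_bot_iff: "invo x = bot \<longleftrightarrow> x = bot"
  using invo_Sup[of "{}"] by (metis Sup_empty image_empty invo_invo)

lemma invo_sup: "invo (sup a b) = sup (invo a) (invo b)"
  using invo_Sup[of "{a, b}"] by simp

lemma mult_sup_left: "a \<odot> sup x y = sup (a \<odot> x) (a \<odot> y)"
  using mult_Sup_left[of a "{x, y}"] by simp

lemma mult_sup_right: "sup x y \<odot> a = sup (x \<odot> a) (y \<odot> a)"
  using mult_Sup_right[of "{x, y}" a] by simp

lemma mult_eq_bot_iff_invo: "x \<odot> y = bot \<longleftrightarrow> invo y \<odot> invo x = bot"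
  by (metis invo_eq_bot_iff invo_mult)

lemma mult_eq_bot_iff_brk_fix: "s \<odot> x = bot \<longleftrightarrow> brk s \<odot> x = x"
  by (metis mult_eq_bot_iff_ex mult_assoc brk_idem)

lemma mult_brk_eq_bot: "s \<odot> brk s = bot"
  using mult_eq_bot_iff_brk_fix brk_idem by metis

lemma brk_mult_invo_eq_bot: "brk s \<odot> invo s = bot"
  using mult_eq_bot_iff_invo[of s "brk s"] mult_brk_eq_bot by simp

lemma mult_eq_bot_iff_fix_brk_invo: "x \<odot> y = bot \<longleftrightarrow> x \<odot> brk (invo y) = x"
  using mult_eq_bot_iff_invo mult_eq_bot_iff_brk_fix by (metis invo_invo invo_mult invo_brk)

lemma brk_brk_brk [simp]: "brk (brk (brk s)) = brk s"
proof -
  have "s \<odot> brk (brk s) = s"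
    using mult_eq_bot_iff_fix_brk_invo[of s "brk s"] mult_brk_eq_bot by simp
  then have same_ann: "s \<odot> y = bot \<longleftrightarrow> brk (brk s) \<odot> y = bot" for y
    using brk_mult_invo_eq_bot[of "brk s"] mult_eq_bot_iff_brk_fix[of s y]
    by (metis mult_assoc mult_bot bot_mult invo_brk)
  then have fix_iff: "brk s \<odot> y = y \<longleftrightarrow> brk (brk (brk s)) \<odot> y = y" for y
    using mult_eq_bot_iff_brk_fix by metis
  have "brk s = invo (brk (brk (brk s)) \<odot> brk s)"
    using fix_iff brk_idem by (metis invo_brk)
  also have "\<dots> = brk s \<odot> brk (brk (brk s))"
    by (simp add: invo_mult)
  also have "\<dots> = brk (brk (brk s))"
    using fix_iff brk_idem by metis
  finally show ?thesis ..
qed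

lemma brk_brk_proj: "k \<in> range brk \<Longrightarrow> brk (brk k) = k"
  by auto

lemma invo_proj: "k \<in> range brk \<Longrightarrow> invo k = k"
  by auto

lemma brk_bot: "brk bot = e"
  using mult_eq_bot_iff_brk_fix[of bot e] by (simp add: unit_right)

lemma mult_perp_perp_eq_bot_iff: "a \<odot> brk (brk (invo t)) = bot \<longleftrightarrow> a \<odot> t = bot"
proof
  assume "a \<odot> brk (brk (invo t)) = bot"
  moreover have "brk (brk (invo t)) \<odot> t = t"
    using brk_mult_invo_eq_bot[of "invo t"] mult_eq_bot_iff_brk_fix by simp
  ultimately show "a \<odot> t = bot"
    by (metis mult_assoc bot_mult)
next
  assume "a \<odot> t = bot"
  then show "a \<odot> brk (brk (invo t)) = bot"
    using mult_eq_bot_iff_fix_brk_invo mult_brk_eq_bot by (metis mult_assoc mult_bot)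
qed

lemma proj_eq_if_mult_eq:
  assumes p: "p \<in> range brk" and q: "q \<in> range brk"
    and "q \<odot> p = p" and "p \<odot> q = q"
  shows "p = q"
proof -
  have "p = invo (q \<odot> p)"
    using assms(3) invo_proj[OF p] by simp
  also have "\<dots> = p \<odot> q"
    using invo_proj[OF p] invo_proj[OF q] by (simp add: invo_mult)
  also have "\<dots> = q"
    by (fact assms(4))
  finally show ?thesis .
qed

lemma proj_eq_if_fix_iff:
  assumes p: "p \<in> range brk" and q: "q \<in> range brk"
    and "\<And>b. p \<odot> b = b \<longleftrightarrow> q \<odot> b = b"
  shows "p = q"
proof (rule proj_eq_if_mult_eq[OF p q])
  show "q \<odot> p = p" and "p \<odot> q = q"
    using assms(3)[of p] assms(3)[of q] p q brk_idem by auto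
qed

lemma proj_eq_if_ann_iff:
  assumes p: "p \<in> range brk" and q: "q \<in> range brk"
    and ann_iff: "\<And>a. a \<odot> p = bot \<longleftrightarrow> a \<odot> q = bot"
  shows "p = q"
proof (rule proj_eq_if_mult_eq[OF p q])
  have "brk q \<odot> p = bot" and "brk p \<odot> q = bot"
    using ann_iff brk_mult_invo_eq_bot p q by (metis invo_proj)+
  then show "q \<odot> p = p" and "p \<odot> q = q"
    using mult_eq_bot_iff_brk_fix p q by (metis brk_brk_proj)+
qed

lemma proj_eq_if_right_ann_iff:
  assumes p: "p \<in> range brk" and q: "q \<in> range brk"
    and ann_iff: "\<And>x. x \<in> range brk \<Longrightarrow> p \<odot> x = bot \<longleftrightarrow> q \<odot> x = bot"
  shows "p = q"
proof -
  have "q \<odot> brk p = bot" and "p \<odot> brk q = bot"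
    using ann_iff[of "brk p"] ann_iff[of "brk q"] mult_brk_eq_bot by auto
  then have "brk q \<odot> brk p = brk p" and "brk p \<odot> brk q = brk q"
    by (simp_all add: mult_eq_bot_iff_brk_fix)
  then have "brk p = brk q"
    by (rule proj_eq_if_mult_eq[OF rangeI rangeI])
  then show ?thesis
    using p q by (metis brk_brk_proj)
qed

lemma porth_iff: "porth m brk x y \<longleftrightarrow> y \<odot> x = bot"
  unfolding porth_def ple_def poc_def using mult_eq_bot_iff_brk_fix by metis

lemma is_adjoint_unique:
  assumes "is_adjoint m brk f g" "is_adjoint m brk f g'" "y \<in> projs brk"
  shows "g y = g' y"
proof (rule proj_eq_if_right_ann_iff)
  show "g y \<in> range brk" "g' y \<in> range brk"
    using assms unfolding is_adjoint_def projs_def by auto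
  fix x
  assume "x \<in> range brk"
  then have "porth m brk x (g y) \<longleftrightarrow> porth m brk x (g' y)"
    using assms unfolding is_adjoint_def projs_def by blast
  then show "g y \<odot> x = bot \<longleftrightarrow> g' y \<odot> x = bot"
    by (simp add: porth_iff)
qed

lemma lin_star_eq_adjoint:
  "is_adjoint m brk f g \<Longrightarrow> y \<in> projs brk \<Longrightarrow> lin_star m brk f y = g y"
  unfolding lin_star_def by (rule is_adjoint_unique[OF someI[of "is_adjoint m brk f"]])

lemma is_adjoint_cong:
  "(\<And>x. x \<in> projs brk \<Longrightarrow> f x = f' x) \<Longrightarrow> is_adjoint m brk f g \<Longrightarrow> is_adjoint m brk f' g"
  by (simp add: is_adjoint_def)

lemma sasaki_eq_brk: "sasaki brk a y = brk (sup (brk a) (brk (sup (brk a) y)))"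
  by (simp add: sasaki_def pmeet_def pJoin_def poc_def)

lemma brk_sup_brk_fix_iff:
  "brk (sup (brk s) (brk t)) \<odot> b = b \<longleftrightarrow> brk (brk s) \<odot> b = b \<and> brk (brk t) \<odot> b = b"
  by (simp add: mult_eq_bot_iff_brk_fix[symmetric] mult_sup_right)

abbreviation \<sigma> :: "'q \<Rightarrow> 'q \<Rightarrow> 'q" where
  "\<sigma> \<equiv> sasaki_action m invo brk"

lemma sasaki_action_eq: "\<sigma> u k = brk (brk (invo (u \<odot> k)))"
  by (simp add: sasaki_action_def fperp_def)

lemma sasaki_action_in_range: "\<sigma> u k \<in> range brk"
  by (simp add: sasaki_action_eq)

lemma mult_sasaki_action_eq_bot_iff: "a \<odot> \<sigma> u k = bot \<longleftrightarrow> a \<odot> u \<odot> k = bot"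
  by (simp add: sasaki_action_eq mult_perp_perp_eq_bot_iff mult_assoc)

lemma sasaki_action_mult: "\<sigma> (u \<odot> v) k = \<sigma> u (\<sigma> v k)"
  by (rule proj_eq_if_ann_iff)
    (simp_all add: sasaki_action_in_range mult_sasaki_action_eq_bot_iff mult_assoc[symmetric])

lemma sasaki_action_unit: "k \<in> range brk \<Longrightarrow> \<sigma> e k = k"
  by (rule proj_eq_if_ann_iff)
    (simp_all add: sasaki_action_in_range mult_sasaki_action_eq_bot_iff unit_right)

lemma sasaki_action_Sup:
  "\<sigma> (Sup A) k = pJoin brk ((\<lambda>u. \<sigma> u k) ` A)"
proof -
  have invo_S: "invo (SUP u\<in>A. \<sigma> u k) = (SUP u\<in>A. \<sigma> u k)"
    by (simp add: invo_Sup image_image sasaki_action_eq)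
  show ?thesis
    unfolding pJoin_def
  proof (rule proj_eq_if_ann_iff)
    fix a
    have "a \<odot> \<sigma> (Sup A) k = bot \<longleftrightarrow> (\<forall>u\<in>A. a \<odot> u \<odot> k = bot)"
      by (simp add: mult_sasaki_action_eq_bot_iff mult_Sup_left mult_Sup_right mult_assoc
          image_image)
    also have "\<dots> \<longleftrightarrow> a \<odot> (SUP u\<in>A. \<sigma> u k) = bot"
      by (simp add: mult_Sup_left image_image mult_sasaki_action_eq_bot_iff)
    also have "\<dots> \<longleftrightarrow> a \<odot> brk (brk (SUP u\<in>A. \<sigma> u k)) = bot"
      using mult_perp_perp_eq_bot_iff invo_S by metis
    finally show "a \<odot> \<sigma> (Sup A) k = bot \<longleftrightarrow> a \<odot> brk (brk (SUP u\<in>A. \<sigma> u k)) = bot" .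
  qed (simp_all add: sasaki_action_in_range)
qed

lemma is_adjoint_sasaki_action: "is_adjoint m brk (\<sigma> u) (\<sigma> (invo u))"
  unfolding is_adjoint_def projs_def
proof (intro conjI ballI)
  fix y
  show "\<sigma> (invo u) y \<in> range brk"
    by (rule sasaki_action_in_range)
next
  fix x y
  assume x: "x \<in> range brk" and y: "y \<in> range brk"
  have "porth m brk (\<sigma> u x) y \<longleftrightarrow> y \<odot> u \<odot> x = bot"
    by (simp add: porth_iff mult_sasaki_action_eq_bot_iff)
  also have "\<dots> \<longleftrightarrow> x \<odot> invo u \<odot> y = bot"
    using mult_eq_bot_iff_invo[of "y \<odot> u" x] x y by (simp add: invo_mult invo_proj mult_assoc)
  also have "\<dots> \<longleftrightarrow> x \<odot> \<sigma> (invo u) y = bot"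
    by (simp add: mult_sasaki_action_eq_bot_iff)
  also have "\<dots> \<longleftrightarrow> porth m brk x (\<sigma> (invo u) y)"
    using mult_eq_bot_iff_invo[of x "\<sigma> (invo u) y"] x
    by (simp add: porth_iff sasaki_action_eq invo_proj)
  finally show "porth m brk (\<sigma> u x) y \<longleftrightarrow> porth m brk x (\<sigma> (invo u) y)" .
qed

lemma lin_star_sasaki_action: "y \<in> projs brk \<Longrightarrow> lin_star m brk (\<sigma> u) y = \<sigma> (invo u) y"
  by (rule lin_star_eq_adjoint[OF is_adjoint_sasaki_action])

lemma lin_star_lin_star_sasaki_action:
  "y \<in> projs brk \<Longrightarrow> lin_star m brk (lin_star m brk (\<sigma> u)) y = \<sigma> u y"
  using is_adjoint_cong[OF lin_star_sasaki_action[symmetric] is_adjoint_sasaki_action[of "invo u"]]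
  by (intro lin_star_eq_adjoint) simp_all

lemma proj_mult_sasaki_action:
  assumes p: "p \<in> range brk"
  shows "p \<odot> \<sigma> p k = \<sigma> p k"
proof -
  have "brk p \<odot> p = bot"
    using brk_mult_invo_eq_bot[of p] p by (simp add: invo_proj)
  then have "brk p \<odot> \<sigma> p k = bot"
    by (simp add: mult_sasaki_action_eq_bot_iff)
  then show ?thesis
    using p by (simp add: mult_eq_bot_iff_brk_fix brk_brk_proj)
qed

lemma brk_brk_sup_mult_sasaki_action:
  assumes p: "p \<in> range brk" and k: "k \<in> range brk"
  defines "X \<equiv> sup (brk p) k"
  shows "brk (brk X) \<odot> \<sigma> p k = \<sigma> p k"
proof -
  have "brk X \<odot> X = bot"
    using brk_mult_invo_eq_bot[of X] k by (simp add: X_def invo_sup invo_proj)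
  then have brk_X_k: "brk X \<odot> k = bot" and "brk X \<odot> brk p = bot"
    by (simp_all add: X_def mult_sup_left)
  then have "brk X \<odot> p = brk X"
    using mult_eq_bot_iff_fix_brk_invo[of "brk X" "brk p"] p by (simp add: brk_brk_proj)
  then have "brk X \<odot> \<sigma> p k = bot"
    using brk_X_k by (simp add: mult_sasaki_action_eq_bot_iff)
  then show ?thesis
    by (simp add: mult_eq_bot_iff_brk_fix)
qed

lemma sasaki_action_fix_if:
  assumes p: "p \<in> range brk" and k: "k \<in> range brk"
    and fix_p: "p \<odot> b = b" and fix_X: "brk (brk (sup (brk p) k)) \<odot> b = b"
  shows "\<sigma> p k \<odot> b = b"
proof -
  define X where "X = sup (brk p) k"
  define z where "z = brk (invo (p \<odot> k))"
  \<comment> \<open>\<open>z = [\<sigma> p k]\<close>, so it suffices to show \<open>z \<odot> b = 0\<close>\<close>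
  have invo_p: "invo p = p" and invo_k: "invo k = k"
    using p k by auto
  have "k \<odot> (p \<odot> z) = bot"
    using mult_brk_eq_bot[of "invo (p \<odot> k)"]
    by (simp add: z_def invo_mult invo_p invo_k mult_assoc)
  moreover have "brk p \<odot> (p \<odot> z) = bot"
    using brk_mult_invo_eq_bot[of p] by (simp add: invo_p mult_assoc[symmetric])
  ultimately have "X \<odot> (p \<odot> z) = bot"
    by (simp add: X_def mult_sup_right)
  then have pz: "brk X \<odot> (p \<odot> z) = p \<odot> z"
    by (simp add: mult_eq_bot_iff_brk_fix)
  have invo_b_p: "invo b \<odot> p = invo b" and invo_b_X: "invo b \<odot> brk (brk X) = invo b"
    using arg_cong[OF fix_p, of invo] arg_cong[OF fix_X, of invo]
    by (simp_all add: X_def invo_mult invo_p)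
  have "invo b \<odot> z = invo b \<odot> (p \<odot> z)"
    using invo_b_p by (simp add: mult_assoc[symmetric])
  also have "\<dots> = invo b \<odot> brk (brk X) \<odot> (brk X \<odot> (p \<odot> z))"
    using pz invo_b_X by simp
  also have "\<dots> = invo b \<odot> (brk (brk X) \<odot> brk X) \<odot> (p \<odot> z)"
    by (simp only: mult_assoc)
  also have "\<dots> = bot"
    using brk_mult_invo_eq_bot[of "brk X"] by simp
  finally have "z \<odot> b = bot"
    using mult_eq_bot_iff_invo[of z b] by (simp add: z_def)
  then show ?thesis
    by (simp add: mult_eq_bot_iff_brk_fix z_def sasaki_action_eq)
qed

lemma sasaki_action_fix_iff:
  assumes p: "p \<in> range brk" and k: "k \<in> range brk"
  shows "\<sigma> p k \<odot> b = b \<longleftrightarrow> p \<odot> b = b \<and> brk (brk (sup (brk p) k)) \<odot> b = b"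
  using sasaki_action_fix_if[OF p k] proj_mult_sasaki_action[OF p]
    brk_brk_sup_mult_sasaki_action[OF p k]
  by (metis mult_assoc)

lemma sasaki_action_proj:
  "p \<in> range brk \<Longrightarrow> k \<in> range brk \<Longrightarrow> \<sigma> p k = sasaki brk p k"
  by (rule proj_eq_if_fix_iff)
    (simp_all add: sasaki_action_in_range sasaki_action_fix_iff sasaki_eq_brk brk_sup_brk_fix_iff
      brk_brk_proj)

lemma sasaki_action_fperp:
  assumes "k \<in> projs brk"
  shows "\<sigma> (fperp invo brk u) k = lin_perp m brk (\<sigma> u) k"
proof -
  have "lin_star m brk (lin_star m brk (\<sigma> u)) (ptop brk) = \<sigma> u e"
    unfolding ptop_def brk_bot[symmetric]
    by (rule lin_star_lin_star_sasaki_action) (simp add: projs_def)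
  moreover have "poc brk (\<sigma> u e) = fperp invo brk u"
    by (simp add: poc_def sasaki_action_eq unit_right fperp_def)
  ultimately show ?thesis
    using assms unfolding lin_perp_def lin_brk_def
    by (simp add: sasaki_action_proj projs_def fperp_def)
qed

end

theorem mainTheorem8:
  fixes m :: "'q::complete_lattice \<Rightarrow> 'q \<Rightarrow> 'q" and e :: 'q
    and invo :: "'q \<Rightarrow> 'q" and brk :: "'q \<Rightarrow> 'q"
  assumes "foulis_quantale m e invo brk"
  defines "h \<equiv> sasaki_action m invo brk"
  shows "(\<forall>u. linear_map m brk (h u))
    \<and> (\<forall>A. \<forall>k\<in>projs brk. h (Sup A) k = lin_Join brk (h ` A) k)
    \<and> (\<forall>u v. \<forall>k\<in>projs brk. h (m u v) k = (h u \<circ> h v) k)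
    \<and> (\<forall>k\<in>projs brk. h e k = id k)
    \<and> (\<forall>u. \<forall>k\<in>projs brk. h (invo u) k = lin_star m brk (h u) k)
    \<and> (\<forall>u. \<forall>k\<in>projs brk. h (fperp invo brk u) k = lin_perp m brk (h u) k)"
proof -
  interpret foulis m e invo brk
    using assms(1) by unfold_locales
  show ?thesis
    unfolding h_def
    using is_adjoint_sasaki_action sasaki_action_in_range sasaki_action_Sup sasaki_action_mult
      sasaki_action_unit lin_star_sasaki_action sasaki_action_fperp
    by (auto simp: linear_map_def projs_def lin_Join_def image_image)
qed

end
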